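(* In the publication model, in the linear rational expectations equilibrium $P=\theta+b\varepsilon+c$ with $\varepsilon=\xi_j$, $b=\frac{\sigma_x^3}{\sigma_x^2+\sigma_y^2}$ and constant $c$, the publishing trader $j$, who knows $x_j=\theta+\sigma_x\varepsilon$ and $P$, can infer $\theta$ exactly: $\theta=\frac{\sigma_x(P-c)-b\,x_j}{\sigma_x-b}$ (note $\sigma_x-b=\frac{\sigma_x\sigma_y^2}{\sigma_x^2+\sigma_y^2}>0$), so that $\mathrm{Var}(\theta\mid x_j,P)=0$ and his demand is $k_j=\frac{\theta-P}{\gamma\sigma_\eta^2}$. In contrast, every other trader $i$ has $\mathrm{Var}(\theta\mid x_i,y_i,P)>0$. Hence trader $j$ gains an informational advantage over all other traders.
   Context: Baseline model. An asset is in aggregate supply $K>0$ and pays $\tilde\theta=\theta+\eta$, where $\eta\sim\mathcal N(0,\sigma_\eta^2)$, $\sigma_\eta>0$, is independent of everything else. A continuum of agents $i\in[0,1]$ hold a uniform (improper, uninformative) prior on $\theta$, so posteriors about $\theta$ are the Gaussian (generalized least squares) posteriors determined by the signals alone. Each agent $i$ observes a private signal $x_i=\theta+\sigma_x\xi_i$, $\sigma_x>0$, with $\xi_i\sim\mathcal N(0,1)$ i.i.d. across agents and independent of $\theta,\eta$. Agents have CARA utility $-E[e^{-\gamma k_i(\tilde\theta-P)}\mid \mathcal I_i]$ with $\gamma>0$ and information $\mathcal I_i$ (which includes the price $P$), so demand is $k_i=\frac{E[\tilde\theta\mid \mathcal I_i]-P}{\gamma\,\mathrm{Var}(\tilde\theta\mid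 \mathcal I_i)}$; the market clears when $\int_0^1k_i\,di=K$. Law-of-large-numbers convention: integrals over $i$ of idiosyncratic noise terms vanish. Publication model: a single trader $j$ publishes $x_j$; every other agent $i$ has information $\mathcal I_i=(x_i,y_i,P)$ with $y_i=x_j+\sigma_y\tau_i=\theta+\sigma_x\xi_j+\sigma_y\tau_i$, $\tau_i\sim\mathcal N(0,1)$ i.i.d., $\sigma_y>0$, independent of all other variables. Writing $\varepsilon:=\xi_j$, a linear rational expectations equilibrium is a triple $(a,b,c)$, $a\neq0$, such that when agents take $P=a\theta+b\varepsilon+c$ and form Bayesian posteriors, market clearing holds for every realization of $(\theta,\varepsilon)$ exactly at that price. Trader $j$ has measure zero, so his own demand does not affect the market-clearing price; trader $j$'s information is $\mathcal I_j=(x_j,P)$. *)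

theory Defs
  imports Complex_Main
begin

text \<open>Gaussian linear signal model with an improper uniform prior on theta.
  An agent observes n signals s_j = h_j * theta + d_j + sum_k M_j_k * u_k, where
  u_0 .. u_(m-1) are independent standard normal shocks. Under the flat prior the
  posterior of theta is the generalized-least-squares (GLS) posterior: its variance
  is the minimal variance of a linear unbiased estimator sum_j w_j (s_j - d_j)
  with sum_j w_j h_j = 1, and its mean is the value of the optimal such estimator.\<close>

definition lin_comb :: "nat \<Rightarrow> (nat \<Rightarrow> real) \<Rightarrow> (nat \<Rightarrow> real) \<Rightarrow> real" where
  "lin_comb n w v = (\<Sum>j<n. w j * v j)"

definition est_var :: "nat \<Rightarrow> nat \<Rightarrow> (nat \<Rightarrow> nat \<Rightarrow> real) \<Rightarrow> (nat \<Rightarrow> real) \<Rightarrow> real" where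
  "est_var n m M w = (\<Sum>k<m. (\<Sum>j<n. w j * M j k)^2)"

definition gls_var :: "nat \<Rightarrow> nat \<Rightarrow> (nat \<Rightarrow> real) \<Rightarrow> (nat \<Rightarrow> nat \<Rightarrow> real) \<Rightarrow> real" where
  "gls_var n m h M = Inf {est_var n m M w | w. lin_comb n w h = 1}"

definition gls_weights :: "nat \<Rightarrow> nat \<Rightarrow> (nat \<Rightarrow> real) \<Rightarrow> (nat \<Rightarrow> nat \<Rightarrow> real) \<Rightarrow> nat \<Rightarrow> real" where
  "gls_weights n m h M = (SOME w. lin_comb n w h = 1 \<and>
      (\<forall>v. lin_comb n v h = 1 \<longrightarrow> est_var n m M w \<le> est_var n m M v))"

definition gls_mean :: "nat \<Rightarrow> nat \<Rightarrow> (nat \<Rightarrow> real) \<Rightarrow> (nat \<Rightarrow> nat \<Rightarrow> real)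
    \<Rightarrow> (nat \<Rightarrow> real) \<Rightarrow> (nat \<Rightarrow> real) \<Rightarrow> real" where
  "gls_mean n m h M d s = lin_comb n (gls_weights n m h M) (\<lambda>j. s j - d j)"

definition cara_demand :: "real \<Rightarrow> real \<Rightarrow> real \<Rightarrow> real \<Rightarrow> real" where
  "cara_demand \<gamma> E V P = (E - P) / (\<gamma> * V)"

end

theory Submission
  imports Defs "HOL-Analysis.Convex"
begin

text \<open>The price loads on the publisher's own noise \<open>\<epsilon>\<close> with weight \<open>b \<noteq> \<sigma>x\<close>, so the
  combination \<open>\<sigma>x (P - c) - b x\<^sub>j\<close> of his two signals cancels \<open>\<epsilon>\<close> and reveals \<open>\<theta>\<close>: an
  unbiased estimator of zero variance, hence zero GLS variance and posterior mean \<open>\<theta>\<close>.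
  Any other trader faces three signals driven by three noises whose loading matrix
  is invertible; some noise realization then shifts all three signals exactly as a unit
  change of \<open>\<theta>\<close> would, and Cauchy--Schwarz bounds every unbiased estimator's variance
  away from zero.\<close>

lemma est_var_nonneg: "0 \<le> est_var n m M w"
  by (simp add: est_var_def sum_nonneg)

lemma est_var_eq_0_iff: "est_var n m M w = 0 \<longleftrightarrow> (\<forall>k<m. (\<Sum>j<n. w j * M j k) = 0)"
  by (auto simp: est_var_def sum_nonneg_eq_0_iff)

lemma gls_var_eq_0I:
  assumes "lin_comb n w h = 1" and "est_var n m M w = 0"
  shows "gls_var n m h M = 0"
proof -
  let ?S = "{est_var n m M v | v. lin_comb n v h = 1}"
  have "0 \<in> ?S" using assms by force
  moreover have "\<forall>y\<in>?S. 0 \<le> y" by (auto simp: est_var_nonneg)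
  ultimately show ?thesis unfolding gls_var_def by (intro cInf_eq_minimum) auto
qed

lemma gls_weights_exact:
  assumes "lin_comb n w h = 1" and "est_var n m M w = 0"
  shows "lin_comb n (gls_weights n m h M) h = 1" and "est_var n m M (gls_weights n m h M) = 0"
proof -
  have "\<exists>w. lin_comb n w h = 1 \<and> (\<forall>v. lin_comb n v h = 1 \<longrightarrow> est_var n m M w \<le> est_var n m M v)"
    using assms est_var_nonneg by metis
  then have opt: "lin_comb n (gls_weights n m h M) h = 1 \<and>
      (\<forall>v. lin_comb n v h = 1 \<longrightarrow> est_var n m M (gls_weights n m h M) \<le> est_var n m M v)"
    unfolding gls_weights_def by (rule someI_ex)
  then show "lin_comb n (gls_weights n m h M) h = 1" ..
  show "est_var n m M (gls_weights n m h M) = 0"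
    using opt assms est_var_nonneg by (metis order_antisym)
qed

lemma gls_mean_exact:
  assumes "lin_comb n w h = 1" and "est_var n m M w = 0"
    and signals: "\<And>j. j < n \<Longrightarrow> s j = h j * \<theta> + d j + (\<Sum>k<m. M j k * u k)"
  shows "gls_mean n m h M d s = \<theta>"
proof -
  let ?W = "gls_weights n m h M"
  have unbiased: "(\<Sum>j<n. ?W j * h j) = 1"
    using gls_weights_exact(1)[OF assms(1,2)] by (simp add: lin_comb_def)
  have noiseless: "\<forall>k<m. (\<Sum>j<n. ?W j * M j k) = 0"
    using gls_weights_exact(2)[OF assms(1,2)] by (simp add: est_var_eq_0_iff)
  have "gls_mean n m h M d s = (\<Sum>j<n. ?W j * (h j * \<theta> + (\<Sum>k<m. M j k * u k)))"
    unfolding gls_mean_def lin_comb_def by (intro sum.cong) (simp_all add: signals)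
  also have "\<dots> = \<theta> * (\<Sum>j<n. ?W j * h j) + (\<Sum>k<m. u k * (\<Sum>j<n. ?W j * M j k))"
    by (simp add: algebra_simps sum.distrib sum_distrib_left sum_distrib_right sum.swap[of _ "{..<n}"])
  also have "\<dots> = \<theta>"
    using unbiased noiseless by simp
  finally show ?thesis .
qed

text \<open>If the noise realization \<open>g\<close> moves every signal exactly as a unit shift of \<open>\<theta>\<close> does,
  then the noise part \<open>\<Sum>k. (\<Sum>j. w j M j k) g k\<close> of an unbiased \<open>w\<close> equals \<open>1\<close>.\<close>

lemma gls_var_lower_bound:
  assumes "lin_comb n w\<^sub>0 h = 1"
    and mimic: "\<And>j. j < n \<Longrightarrow> (\<Sum>k<m. M j k * g k) = h j"
    and g_pos: "0 < (\<Sum>k<m. g k ^ 2)"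
  shows "1 / (\<Sum>k<m. g k ^ 2) \<le> gls_var n m h M"
proof -
  let ?S = "{est_var n m M v | v. lin_comb n v h = 1}"
  have "1 / (\<Sum>k<m. g k ^ 2) \<le> est_var n m M v" if "lin_comb n v h = 1" for v
  proof -
    have "1 = (\<Sum>j<n. v j * (\<Sum>k<m. M j k * g k))"
      using that mimic by (simp add: lin_comb_def)
    also have "\<dots> = (\<Sum>k<m. (\<Sum>j<n. v j * M j k) * g k)"
      by (simp add: sum_distrib_left sum_distrib_right sum.swap[of _ "{..<n}"] mult.assoc)
    finally have "1 \<le> est_var n m M v * (\<Sum>k<m. g k ^ 2)"
      using Cauchy_Schwarz_ineq_sum[of "\<lambda>k. \<Sum>j<n. v j * M j k" g "{..<m}"]
      by (simp add: est_var_def)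
    then show ?thesis using g_pos by (simp add: divide_le_eq)
  qed
  moreover have "?S \<noteq> {}" using assms(1) by blast
  ultimately show ?thesis unfolding gls_var_def by (intro cInf_greatest) auto
qed

lemma publisher_exact_weights:
  fixes x b :: real
  assumes "x \<noteq> b"
  obtains w where "lin_comb 2 w (\<lambda>_. 1) = 1" and "est_var 2 1 (\<lambda>j k. [[x], [b]] ! j ! k) w = 0"
proof
  let ?w = "\<lambda>j::nat. if j = 0 then - b / (x - b) else x / (x - b)"
  have d: "x - b \<noteq> 0" using assms by simp
  show "lin_comb 2 ?w (\<lambda>_. 1) = 1"
    using d by (simp add: lin_comb_def eval_nat_numeral diff_divide_distrib[symmetric])
  show "est_var 2 1 (\<lambda>j k. [[x], [b]] ! j ! k) ?w = 0"
    using d by (simp add: est_var_def eval_nat_numeral field_simps)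
qed

lemma publisher_gls_var:
  fixes x b :: real
  assumes "x \<noteq> b"
  shows "gls_var 2 1 (\<lambda>_. 1) (\<lambda>j k. [[x], [b]] ! j ! k) = 0"
  using publisher_exact_weights[OF assms] gls_var_eq_0I by metis

lemma publisher_gls_mean:
  fixes x b c \<theta> \<epsilon> xj P :: real
  assumes "x \<noteq> b" and "xj = \<theta> + x * \<epsilon>" and "P = \<theta> + b * \<epsilon> + c"
  shows "gls_mean 2 1 (\<lambda>_. 1) (\<lambda>j k. [[x], [b]] ! j ! k) (\<lambda>j. [0, c] ! j) (\<lambda>j. [xj, P] ! j) = \<theta>"
proof -
  obtain w where w: "lin_comb 2 w (\<lambda>_. 1) = 1" "est_var 2 1 (\<lambda>j k. [[x], [b]] ! j ! k) w = 0"
    using publisher_exact_weights[OF assms(1)] .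
  show ?thesis
  proof (rule gls_mean_exact[OF w, where u = "\<lambda>_. \<epsilon>"])
    fix j :: nat
    assume "j < 2"
    then consider "j = 0" | "j = 1" by linarith
    then show "[xj, P] ! j = 1 * \<theta> + [0, c] ! j + (\<Sum>k<1. [[x], [b]] ! j ! k * \<epsilon>)"
      by cases (simp_all add: assms(2,3))
  qed
qed

lemma outsider_gls_var_pos:
  fixes x y b :: real
  assumes "x \<noteq> 0" and "y \<noteq> 0" and "b \<noteq> 0"
  shows "0 < gls_var 3 3 (\<lambda>_. 1) (\<lambda>j k. [[x, 0, 0], [0, x, y], [0, b, 0]] ! j ! k)"
proof -
  define g where "g = (\<lambda>k. [1 / x, 1 / b, (1 - x / b) / y] ! k)"
  have mimic: "(\<Sum>k<3. [[x, 0, 0], [0, x, y], [0, b, 0]] ! j ! k * g k) = 1" if "j < 3" for j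
  proof -
    from \<open>j < 3\<close> consider "j = 0" | "j = 1" | "j = 2" by linarith
    then show ?thesis
      by cases (use assms in \<open>simp_all add: g_def eval_nat_numeral field_simps\<close>)
  qed
  have "0 < g 0 ^ 2" using assms by (simp add: g_def)
  then have g_pos: "0 < (\<Sum>k<3. g k ^ 2)"
    by (simp add: eval_nat_numeral add_pos_nonneg)
  have unbiased: "lin_comb 3 (\<lambda>_. 1 / 3) (\<lambda>_. 1) = 1"
    by (simp add: lin_comb_def)
  have "1 / (\<Sum>k<3. g k ^ 2) \<le> gls_var 3 3 (\<lambda>_. 1) (\<lambda>j k. [[x, 0, 0], [0, x, y], [0, b, 0]] ! j ! k)"
    by (rule gls_var_lower_bound[OF unbiased _ g_pos]) (rule mimic)
  with g_pos show ?thesis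
    by (meson divide_pos_pos less_le_trans zero_less_one)
qed

theorem proposition4:
  fixes \<sigma>x \<sigma>y \<sigma>\<eta> \<gamma> c b :: real
  assumes hx: "\<sigma>x > 0" and hy: "\<sigma>y > 0" and he: "\<sigma>\<eta> > 0" and hg: "\<gamma> > 0"
    and hb: "b = \<sigma>x ^ 3 / (\<sigma>x ^ 2 + \<sigma>y ^ 2)"
  shows
    "\<sigma>x - b = \<sigma>x * \<sigma>y ^ 2 / (\<sigma>x ^ 2 + \<sigma>y ^ 2) \<and> \<sigma>x - b > 0
    \<and> (\<forall>\<theta> \<epsilon> xj P. xj = \<theta> + \<sigma>x * \<epsilon> \<longrightarrow> P = \<theta> + b * \<epsilon> + c \<longrightarrow>
         \<theta> = (\<sigma>x * (P - c) - b * xj) / (\<sigma>x - b))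
    \<and> gls_var 2 1 (\<lambda>_. 1) (\<lambda>j k. [[\<sigma>x], [b]] ! j ! k) = 0
    \<and> (\<forall>\<theta> \<epsilon> xj P. xj = \<theta> + \<sigma>x * \<epsilon> \<longrightarrow> P = \<theta> + b * \<epsilon> + c \<longrightarrow>
         cara_demand \<gamma>
           (gls_mean 2 1 (\<lambda>_. 1) (\<lambda>j k. [[\<sigma>x], [b]] ! j ! k) (\<lambda>j. [0, c] ! j)
              (\<lambda>j. [xj, P] ! j))
           (gls_var 2 1 (\<lambda>_. 1) (\<lambda>j k. [[\<sigma>x], [b]] ! j ! k) + \<sigma>\<eta> ^ 2)
           P
         = (\<theta> - P) / (\<gamma> * \<sigma>\<eta> ^ 2))
    \<and> gls_var 3 3 (\<lambda>_. 1)
        (\<lambda>j k. [[\<sigma>x, 0, 0], [0, \<sigma>x, \<sigma>y], [0, b, 0]] ! j ! k) > 0"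
proof -
  have s2: "\<sigma>x ^ 2 + \<sigma>y ^ 2 > 0" using hx by (simp add: add_pos_nonneg)
  have gap: "\<sigma>x - b = \<sigma>x * \<sigma>y ^ 2 / (\<sigma>x ^ 2 + \<sigma>y ^ 2)"
  proof -
    have "\<sigma>x * \<sigma>x + \<sigma>y * \<sigma>y \<noteq> 0" using s2 by (metis power2_eq_square less_irrefl)
    then show ?thesis using hb by (simp add: field_simps power2_eq_square power3_eq_cube)
  qed
  have gap_pos: "\<sigma>x - b > 0" using gap hx hy s2 by simp
  have b_pos: "b > 0" using hb hx s2 by simp
  have inference: "\<forall>\<theta> \<epsilon> xj P. xj = \<theta> + \<sigma>x * \<epsilon> \<longrightarrow> P = \<theta> + b * \<epsilon> + c \<longrightarrow>
      \<theta> = (\<sigma>x * (P - c) - b * xj) / (\<sigma>x - b)"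
    using gap_pos by (auto simp: field_simps)
  have var_zero: "gls_var 2 1 (\<lambda>_. 1) (\<lambda>j k. [[\<sigma>x], [b]] ! j ! k) = 0"
    using gap_pos by (intro publisher_gls_var) simp
  have "gls_mean 2 1 (\<lambda>_. 1) (\<lambda>j k. [[\<sigma>x], [b]] ! j ! k) (\<lambda>j. [0, c] ! j) (\<lambda>j. [xj, P] ! j) = \<theta>"
    if "xj = \<theta> + \<sigma>x * \<epsilon>" "P = \<theta> + b * \<epsilon> + c" for \<theta> \<epsilon> xj P
    using gap_pos that by (intro publisher_gls_mean) auto
  then have demand: "\<forall>\<theta> \<epsilon> xj P. xj = \<theta> + \<sigma>x * \<epsilon> \<longrightarrow> P = \<theta> + b * \<epsilon> + c \<longrightarrow>
      cara_demand \<gamma> (gls_mean 2 1 (\<lambda>_. 1) (\<lambda>j k. [[\<sigma>x], [b]] ! j ! k) (\<lambda>j. [0, c] ! j)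
        (\<lambda>j. [xj, P] ! j)) (gls_var 2 1 (\<lambda>_. 1) (\<lambda>j k. [[\<sigma>x], [b]] ! j ! k) + \<sigma>\<eta> ^ 2) P
      = (\<theta> - P) / (\<gamma> * \<sigma>\<eta> ^ 2)"
    using var_zero by (simp add: cara_demand_def)
  have "0 < gls_var 3 3 (\<lambda>_. 1) (\<lambda>j k. [[\<sigma>x, 0, 0], [0, \<sigma>x, \<sigma>y], [0, b, 0]] ! j ! k)"
    using hx hy b_pos by (intro outsider_gls_var_pos) auto
  with gap gap_pos inference var_zero demand show ?thesis by blast
qed

end
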